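(* Let $\beta_1 = 0$ and let $\beta_2 \in [0,1)$. There exist a one-dimensional online convex optimization problem (a compact convex feasible set $\mathcal{F} \subset \mathbb{R}$ and a sequence of convex loss functions $f_t : \mathcal{F} \to \mathbb{R}$ with uniformly bounded gradients) and an initial point $x_1 \in \mathcal{F}$ such that, for every initial step size $\alpha > 0$, the iterates $\{x_t\}$ of \textsc{Adam} with parameters $\alpha, \beta_1, \beta_2$ satisfy $R_T/T \not\to 0$ as $T \to \infty$.
   Context: \textsc{Adam} (without debiasing) on a closed convex set $\mathcal{F} \subset \mathbb{R}^d$ with loss functions $f_1, f_2, \dots$, initial point $x_1 \in \mathcal{F}$, initial step size $\alpha > 0$ and constants $\beta_1, \beta_2 \in [0,1)$ is defined as follows. Set $m_0 = v_0 = 0 \in \mathbb{R}^d$. For $t = 1, 2, \dots$: $g_t = \nabla f_t(x_t)$; $m_t = \beta_1 m_{t-1} + (1-\beta_1) g_t$; $v_t = \beta_2 v_{t-1} + (1-\beta_2) g_t^2$ (square taken coordinatewise); $V_t = \mathrm{diag}(v_t)$; $\alpha_t = \alpha/\sqrt{t}$; $\hat{x}_{t+1} = x_t - \alpha_t V_t^{-1/2} m_t$; $x_{t+1} = \Pi_{\mathcal{F}, \sqrt{V_t}}(\hat{x}_{t+1})$, where for a positive definite matrix $M$, $\Pi_{\mathcal{F}, M}(y) = \arg\min_{x \in \mathcal{F}} \|M^{1/2}(x-y)\|$. The regret after $T$ steps is $R_T = \sum_{t=1}^T f_t(x_t) - \min_{x \in \mathcal{F}} \sum_{t=1}^T f_t(x)$.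 *)

theory Defs
  imports "HOL-Analysis.Analysis"
begin

definition wproj :: "real set \<Rightarrow> real \<Rightarrow> real \<Rightarrow> real" where
  "wproj F M y = (SOME x. x \<in> F \<and> (\<forall>z\<in>F. \<bar>sqrt M * (x - y)\<bar> \<le> \<bar>sqrt M * (z - y)\<bar>))"

text \<open>One-dimensional Adam without debiasing. The state after n steps is
  (x_{n+1}, m_n, v_n); losses are indexed from 1, gradient g_t = f_t'(x_t).\<close>
fun adam_state :: "real set \<Rightarrow> (nat \<Rightarrow> real \<Rightarrow> real) \<Rightarrow> real \<Rightarrow> real \<Rightarrow> real \<Rightarrow> real
     \<Rightarrow> nat \<Rightarrow> real \<times> real \<times> real" where
  "adam_state F f x1 \<alpha> \<beta>1 \<beta>2 0 = (x1, 0, 0)"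
| "adam_state F f x1 \<alpha> \<beta>1 \<beta>2 (Suc n) =
     (let (x, m, v) = adam_state F f x1 \<alpha> \<beta>1 \<beta>2 n;
          t = Suc n;
          g = deriv (f t) x;
          m' = \<beta>1 * m + (1 - \<beta>1) * g;
          v' = \<beta>2 * v + (1 - \<beta>2) * g\<^sup>2;
          \<alpha>t = \<alpha> / sqrt (real t);
          xhat = x - \<alpha>t * m' / sqrt v'
      in (wproj F (sqrt v') xhat, m', v'))"

definition adam_x :: "real set \<Rightarrow> (nat \<Rightarrow> real \<Rightarrow> real) \<Rightarrow> real \<Rightarrow> real \<Rightarrow> real \<Rightarrow> real
     \<Rightarrow> nat \<Rightarrow> real" where
  "adam_x F f x1 \<alpha> \<beta>1 \<beta>2 t = fst (adam_state F f x1 \<alpha> \<beta>1 \<beta>2 (t - 1))"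

definition regret :: "real set \<Rightarrow> (nat \<Rightarrow> real \<Rightarrow> real) \<Rightarrow> (nat \<Rightarrow> real) \<Rightarrow> nat \<Rightarrow> real" where
  "regret F f x T = (\<Sum>t=1..T. f t (x t)) - (INF y\<in>F. \<Sum>t=1..T. f t y)"

end

theory Submission imports Defs begin

text \<open>Take F = [0,1], x1 = 1 and the linear losses c t * x with c t = k when k divides t and
  c t = -1 otherwise. With \<beta>1 = 0 each Adam step moves x t by (\<alpha> / sqrt t) * c t / sqrt v t and
  clamps to [0,1]. The gradient k inflates v t to at least (1 - \<beta>2) k^2, so the downward step at
  t = q k has length at most \<alpha> / sqrt ((1 - \<beta>2) q k). If \<beta>2^m k^2 \<le> 1, then m steps later v t \<le> 2
  again, so each of the last k - m upward steps of the period has length at least \<alpha> / (2 sqrt (q k)).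
  If k - m \<ge> 2 / sqrt (1 - \<beta>2), Adam is therefore back at 1 before every multiple of k: it pays k
  there and at least -1 elsewhere, while the point 0 pays nothing, so the regret grows like T / k.\<close>

definition clamp :: "real \<Rightarrow> real" where
  "clamp y = max 0 (min 1 y)"

lemma clamp_bounds: "0 \<le> clamp y" "clamp y \<le> 1"
  by (auto simp: clamp_def)

lemma min_le_clamp: "min 1 y \<le> clamp y"
  by (auto simp: clamp_def)

lemma wproj_unit_interval:
  assumes "0 < M"
  shows "wproj {0..1} M y = clamp y"
proof -
  let ?P = "\<lambda>x. x \<in> {0..1::real} \<and> (\<forall>z\<in>{0..1}. \<bar>sqrt M * (x - y)\<bar> \<le> \<bar>sqrt M * (z - y)\<bar>)"
  have sM: "0 < sqrt M" using assms by simp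
  have P: "?P (clamp y)"
    using sM by (auto simp: clamp_def abs_mult)
  have unique: "x = clamp y" if "?P x" for x
  proof -
    have "\<bar>x - y\<bar> \<le> \<bar>clamp y - y\<bar>" using that sM
      by (auto simp: abs_mult clamp_def intro: ccontr dest!: bspec[where x="clamp y"])
    then show ?thesis using that by (auto simp: clamp_def split: if_splits)
  qed
  show ?thesis unfolding wproj_def using someI[of ?P, OF P] unique by blast
qed

lemma clamp_ascent:
  assumes "\<And>i. i < j \<Longrightarrow> x (Suc i) = clamp (x i + u (Suc i))"
    and "\<And>i. 0 < i \<Longrightarrow> i \<le> j \<Longrightarrow> 0 \<le> u i"
  shows "min 1 (x 0 + (\<Sum>i=1..j. u i)) \<le> x j"
  using assms
proof (induction j)
  case 0
  then show ?case by simp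
next
  case (Suc j)
  have "min 1 (x 0 + (\<Sum>i=1..j. u i)) \<le> x j"
    using Suc by simp
  then have "min 1 (x 0 + (\<Sum>i=1..Suc j. u i)) \<le> min 1 (x j + u (Suc j))"
    using Suc.prems(2)[of "Suc j"] by simp
  also have "\<dots> \<le> x (Suc j)"
    using Suc.prems(1)[of j] min_le_clamp by simp
  finally show ?case .
qed

subsection \<open>Adam on linear losses over the unit interval\<close>

fun sq_avg :: "real \<Rightarrow> (nat \<Rightarrow> real) \<Rightarrow> nat \<Rightarrow> real" where
  "sq_avg b c 0 = 0"
| "sq_avg b c (Suc n) = b * sq_avg b c n + (1 - b) * (c (Suc n))\<^sup>2"

lemma sq_avg_nonneg: "0 \<le> b \<Longrightarrow> b < 1 \<Longrightarrow> 0 \<le> sq_avg b c n"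
  by (induction n) auto

lemma sq_avg_ge_last:
  assumes "0 \<le> b" "b < 1" "1 \<le> n"
  shows "(1 - b) * (c n)\<^sup>2 \<le> sq_avg b c n"
proof (cases n)
  case (Suc p)
  have "0 \<le> b * sq_avg b c p" using sq_avg_nonneg assms by simp
  then show ?thesis using Suc by simp
qed (use assms in simp)

lemma sq_avg_pos:
  assumes "0 \<le> b" "b < 1" "1 \<le> n" "c n \<noteq> 0"
  shows "0 < sq_avg b c n"
proof -
  have "0 < (1 - b) * (c n)\<^sup>2" using assms by simp
  then show ?thesis using sq_avg_ge_last[OF assms(1-3), of c] by linarith
qed

lemma sq_avg_le:
  assumes "0 \<le> b" "b < 1" and bound: "\<And>t. (c t)\<^sup>2 \<le> G"
  shows "sq_avg b c n \<le> G"
proof (induction n)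
  case 0
  show ?case using order_trans[OF zero_le_power2 bound] by simp
next
  case (Suc n)
  have "b * sq_avg b c n + (1 - b) * (c (Suc n))\<^sup>2 \<le> b * G + (1 - b) * G"
    using Suc assms by (intro add_mono mult_left_mono) auto
  then show ?case by (simp add: algebra_simps)
qed

lemma sq_avg_decay:
  assumes "0 \<le> b" "b < 1" and small: "\<And>j. n < j \<Longrightarrow> j \<le> n + i \<Longrightarrow> (c j)\<^sup>2 \<le> 1"
  shows "sq_avg b c (n + i) \<le> b ^ i * sq_avg b c n + 1"
  using small
proof (induction i)
  case 0
  then show ?case by simp
next
  case (Suc i)
  have "b * sq_avg b c (n + i) \<le> b * (b ^ i * sq_avg b c n + 1)"
    using Suc assms(1) by (intro mult_left_mono) auto
  moreover have "(1 - b) * (c (Suc (n + i)))\<^sup>2 \<le> 1 - b"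
    using Suc.prems[of "Suc (n + i)"] assms(2) by simp
  ultimately show ?case by (simp add: algebra_simps)
qed

definition adam_rate :: "real \<Rightarrow> real \<Rightarrow> (nat \<Rightarrow> real) \<Rightarrow> nat \<Rightarrow> real" where
  "adam_rate a b c t = a / sqrt (real t) / sqrt (sq_avg b c t)"

lemma adam_rate_nonneg: "0 \<le> a \<Longrightarrow> 0 \<le> b \<Longrightarrow> b < 1 \<Longrightarrow> 0 \<le> adam_rate a b c t"
  using sq_avg_nonneg by (simp add: adam_rate_def)

text \<open>As in adam_state, adam_lin a b c s n is the iterate x_(n+1) started from x_1 = s.\<close>
fun adam_lin :: "real \<Rightarrow> real \<Rightarrow> (nat \<Rightarrow> real) \<Rightarrow> real \<Rightarrow> nat \<Rightarrow> real" where
  "adam_lin a b c s 0 = s"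
| "adam_lin a b c s (Suc n) = clamp (adam_lin a b c s n - adam_rate a b c (Suc n) * c (Suc n))"

lemma adam_lin_le_one: "s \<le> 1 \<Longrightarrow> adam_lin a b c s n \<le> 1"
  using clamp_bounds(2) by (cases n) auto

lemma adam_state_linear:
  assumes "0 \<le> b" "b < 1" "\<And>t. 1 \<le> t \<Longrightarrow> c t \<noteq> 0"
  shows "\<exists>m. adam_state {0..1} (\<lambda>t x. c t * x) s a 0 b n = (adam_lin a b c s n, m, sq_avg b c n)"
proof (induction n)
  case 0
  then show ?case by simp
next
  case (Suc n)
  then obtain m where m: "adam_state {0..1} (\<lambda>t x. c t * x) s a 0 b n
      = (adam_lin a b c s n, m, sq_avg b c n)"
    by blast
  have deriv: "deriv (\<lambda>x. c (Suc n) * x) y = c (Suc n)" for y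
    by (rule DERIV_imp_deriv) (auto intro!: derivative_eq_intros)
  have "0 < sq_avg b c (Suc n)"
    by (intro sq_avg_pos) (use assms in auto)
  then have proj: "wproj {0..1} (sqrt (sq_avg b c (Suc n))) y = clamp y" for y
    by (simp add: wproj_unit_interval)
  have "adam_state {0..1} (\<lambda>t x. c t * x) s a 0 b (Suc n)
      = (wproj {0..1} (sqrt (sq_avg b c (Suc n)))
          (adam_lin a b c s n - a / sqrt (real (Suc n)) * c (Suc n) / sqrt (sq_avg b c (Suc n))),
         c (Suc n), sq_avg b c (Suc n))"
    by (simp add: m deriv Let_def)
  then show ?case
    by (simp add: proj adam_rate_def del: sq_avg.simps)
qed

lemma adam_x_linear:
  assumes "0 \<le> b" "b < 1" "\<And>t. 1 \<le> t \<Longrightarrow> c t \<noteq> 0"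
  shows "adam_x {0..1} (\<lambda>t x. c t * x) s a 0 b t = adam_lin a b c s (t - 1)"
proof -
  obtain m where "adam_state {0..1} (\<lambda>t x. c t * x) s a 0 b (t - 1)
      = (adam_lin a b c s (t - 1), m, sq_avg b c (t - 1))"
    using adam_state_linear[of b c s a "t - 1", OF assms] by blast
  then show ?thesis unfolding adam_x_def by simp
qed

lemma regret_linear_ge:
  "(\<Sum>t=1..T. c t * x t) \<le> regret {0..1} (\<lambda>t y. c t * y) x T"
proof -
  have "bdd_below ((\<lambda>y. \<Sum>t=1..T. c t * y) ` {0..1})"
  proof (rule bdd_belowI2)
    fix y :: real assume "y \<in> {0..1}"
    then have bound: "\<bar>c t * y\<bar> \<le> \<bar>c t\<bar>" for t
      by (simp add: abs_mult mult_left_le)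
    have "- \<bar>c t\<bar> \<le> c t * y" for t
      using abs_le_D2[OF bound[of t]] by linarith
    then show "- (\<Sum>t=1..T. \<bar>c t\<bar>) \<le> (\<Sum>t=1..T. c t * y)"
      unfolding sum_negf[symmetric] by (intro sum_mono)
  qed
  then have "(INF y\<in>{0..1}. \<Sum>t=1..T. c t * y) \<le> (\<Sum>t=1..T. c t * 0)"
    by (rule cINF_lower) simp
  then show ?thesis unfolding regret_def by simp
qed

subsection \<open>The spiked gradient sequence\<close>

definition spike_grad :: "nat \<Rightarrow> nat \<Rightarrow> real" where
  "spike_grad k t = (if k dvd t then real k else -1)"

lemma spike_grad_nonzero: "1 \<le> k \<Longrightarrow> spike_grad k t \<noteq> 0"
  by (simp add: spike_grad_def)

lemma spike_grad_sq_le: "1 \<le> k \<Longrightarrow> (spike_grad k t)\<^sup>2 \<le> (real k)\<^sup>2"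
  by (simp add: spike_grad_def)

lemma spike_grad_between:
  assumes "0 < i" "i < k"
  shows "spike_grad k (q * k + i) = -1"
proof -
  have "\<not> k dvd i" using assms by (auto dest: dvd_imp_le)
  then show ?thesis by (simp add: spike_grad_def)
qed

lemma sum_spike_grad:
  "1 \<le> k \<Longrightarrow> (\<Sum>t=1..T. spike_grad k t) = real (k + 1) * real (T div k) - real T"
proof (induction T)
  case 0
  then show ?case by simp
next
  case (Suc T)
  then show ?case
    by (cases "k dvd Suc T") (auto simp: spike_grad_def div_Suc dvd_eq_mod_eq_0 algebra_simps)
qed

lemma sum_spike_grad_ge:
  assumes "1 \<le> k"
  shows "real T / real k - real k - 1 \<le> (\<Sum>t=1..T. spike_grad k t)"
proof -
  have "real T \<le> real (T div k) * real k + real k"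
  proof -
    have "T \<le> T div k * k + k"
      using assms mod_less_divisor[of k T] div_mult_mod_eq[of T k] by linarith
    then show ?thesis by (metis of_nat_add of_nat_le_iff of_nat_mult)
  qed
  then have "real T / real k - 1 \<le> real (T div k)"
    using assms by (simp add: field_simps)
  then have "real (k + 1) * (real T / real k - 1) \<le> real (k + 1) * real (T div k)"
    by (intro mult_left_mono) auto
  moreover have "real (k + 1) * (real T / real k - 1) = real T + real T / real k - real k - 1"
    using assms by (simp add: field_simps)
  ultimately show ?thesis
    using sum_spike_grad[OF assms, of T] by linarith
qed

lemma sq_avg_spike_ge:
  assumes "0 \<le> b" "b < 1" "1 \<le> q" "1 \<le> k"
  shows "(1 - b) * (real k)\<^sup>2 \<le> sq_avg b (spike_grad k) (q * k)"
  using sq_avg_ge_last[OF assms(1,2), of "q * k" "spike_grad k"] assms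
  by (simp add: spike_grad_def)

lemma sq_avg_after_spike:
  assumes "0 \<le> b" "b < 1" "1 \<le> k" "i < k"
  shows "sq_avg b (spike_grad k) (q * k + i) \<le> b ^ i * (real k)\<^sup>2 + 1"
proof -
  have "(spike_grad k j)\<^sup>2 \<le> 1" if "q * k < j" "j \<le> q * k + i" for j
  proof -
    have "j = q * k + (j - q * k)" "0 < j - q * k" "j - q * k < k"
      using that assms(4) by auto
    then show ?thesis using spike_grad_between[of "j - q * k" k q] by simp
  qed
  then have "sq_avg b (spike_grad k) (q * k + i) \<le> b ^ i * sq_avg b (spike_grad k) (q * k) + 1"
    by (rule sq_avg_decay[OF assms(1,2)])
  also have "\<dots> \<le> b ^ i * (real k)\<^sup>2 + 1"
    using assms sq_avg_le[OF assms(1,2) spike_grad_sq_le]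
    by (intro add_right_mono mult_left_mono) auto
  finally show ?thesis .
qed

lemma spike_rate_le:
  assumes "0 \<le> a" "0 \<le> b" "b < 1" "1 \<le> q" "1 \<le> k"
  shows "adam_rate a b (spike_grad k) (q * k) * real k \<le> a / (sqrt (real (q * k)) * sqrt (1 - b))"
proof -
  let ?v = "sq_avg b (spike_grad k) (q * k)"
  have low: "sqrt (1 - b) * real k \<le> sqrt ?v"
    using real_sqrt_le_mono[OF sq_avg_spike_ge[OF assms(2-5)]] assms
    by (simp add: real_sqrt_mult)
  have pos: "0 < sqrt (1 - b) * real k" using assms by simp
  then have v_pos: "0 < sqrt ?v" using low by linarith
  have "adam_rate a b (spike_grad k) (q * k) * real k
      \<le> a / sqrt (real (q * k)) / (sqrt (1 - b) * real k) * real k"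
    unfolding adam_rate_def using assms low pos v_pos
    by (intro mult_right_mono divide_left_mono) auto
  also have "\<dots> = a / (sqrt (real (q * k)) * sqrt (1 - b))"
    using pos by (simp add: field_simps)
  finally show ?thesis .
qed

lemma recovery_rate_ge:
  assumes "0 \<le> a" "0 \<le> b" "b < 1" "1 \<le> q" "1 \<le> k" "m \<le> i" "i < k"
    and decayed: "b ^ m * (real k)\<^sup>2 \<le> 1"
  shows "a / (2 * sqrt (real (q * k))) \<le> adam_rate a b (spike_grad k) (q * k + i)"
proof -
  let ?v = "sq_avg b (spike_grad k) (q * k + i)"
  have "?v \<le> b ^ i * (real k)\<^sup>2 + 1"
    by (rule sq_avg_after_spike) (use assms in auto)
  also have "b ^ i * (real k)\<^sup>2 \<le> b ^ m * (real k)\<^sup>2"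
    using assms by (intro mult_right_mono power_decreasing) auto
  finally have v_le: "?v \<le> 2" using decayed by simp
  have "0 < q * k + i"
    using assms(4,5) by simp
  then have t_pos: "0 < real (q * k + i)"
    by (simp only: of_nat_0_less_iff)
  have "1 \<le> q * k + i"
    using \<open>0 < q * k + i\<close> by linarith
  have v_pos: "0 < ?v"
    using sq_avg_pos[OF assms(2,3) \<open>1 \<le> q * k + i\<close> spike_grad_nonzero[OF assms(5)]] .
  have "q * k + i \<le> 2 * (q * k)"
    using assms by (metis mult_2 add_le_mono1 less_imp_le_nat mult_le_mono1 mult_1 le_trans
        add_left_mono)
  then have t_le: "real (q * k + i) \<le> 2 * real (q * k)"
    by (metis of_nat_le_iff of_nat_mult of_nat_numeral)
  have "sqrt (real (q * k + i)) * sqrt ?v \<le> sqrt (2 * real (q * k)) * sqrt 2"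
    using t_le v_le v_pos by (intro mult_mono) auto
  also have "\<dots> = 2 * sqrt (real (q * k))"
    by (simp add: real_sqrt_mult)
  finally have prod_le: "sqrt (real (q * k + i)) * sqrt ?v \<le> 2 * sqrt (real (q * k))" .
  have prod_pos: "0 < sqrt (real (q * k + i)) * sqrt ?v"
    using t_pos v_pos by simp
  have two_pos: "0 < 2 * sqrt (real (q * k))"
    using prod_le prod_pos by linarith
  have "a / (2 * sqrt (real (q * k))) \<le> a / (sqrt (real (q * k + i)) * sqrt ?v)"
    by (rule divide_left_mono[OF prod_le assms(1) mult_pos_pos[OF two_pos prod_pos]])
  then show ?thesis
    unfolding adam_rate_def divide_divide_eq_left .
qed

text \<open>The k - m steps from the m-th on after a spike already make up for the spike.\<close>
lemma recovery_sum_ge: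
  assumes "0 \<le> a" "0 \<le> b" "b < 1" "1 \<le> q" "1 \<le> m" "m < k"
    and decayed: "b ^ m * (real k)\<^sup>2 \<le> 1" and gap: "2 / sqrt (1 - b) \<le> real (k - m)"
  shows "adam_rate a b (spike_grad k) (q * k) * real k
    \<le> (\<Sum>i=1..k-1. adam_rate a b (spike_grad k) (q * k + i))"
proof -
  let ?r = "a / (2 * sqrt (real (q * k)))"
  have "adam_rate a b (spike_grad k) (q * k) * real k \<le> a / (sqrt (real (q * k)) * sqrt (1 - b))"
    using assms by (intro spike_rate_le) auto
  also have "\<dots> = ?r * (2 / sqrt (1 - b))"
    by (simp add: field_simps)
  also have "\<dots> \<le> ?r * real (k - m)"
    using gap assms by (intro mult_left_mono) auto
  also have "\<dots> = real (card {m..k-1}) * ?r"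
    using assms by simp
  also have "\<dots> \<le> (\<Sum>i=m..k-1. adam_rate a b (spike_grad k) (q * k + i))"
    using assms by (intro sum_bounded_below recovery_rate_ge) auto
  also have "\<dots> \<le> (\<Sum>i=1..k-1. adam_rate a b (spike_grad k) (q * k + i))"
    using assms adam_rate_nonneg by (intro sum_mono2) auto
  finally show ?thesis .
qed

lemma adam_lin_spike_start:
  assumes "0 \<le> a" "0 \<le> b" "b < 1" "j < k"
  shows "adam_lin a b (spike_grad k) 1 j = 1"
proof -
  have "min 1 (adam_lin a b (spike_grad k) 1 0 + (\<Sum>i=1..j. adam_rate a b (spike_grad k) i))
      \<le> adam_lin a b (spike_grad k) 1 j"
  proof (rule clamp_ascent)
    fix i assume "i < j"
    then show "adam_lin a b (spike_grad k) 1 (Suc i)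
        = clamp (adam_lin a b (spike_grad k) 1 i + adam_rate a b (spike_grad k) (Suc i))"
      using spike_grad_between[of "Suc i" k 0] assms(4) by simp
  qed (use assms adam_rate_nonneg in auto)
  moreover have "0 \<le> (\<Sum>i=1..j. adam_rate a b (spike_grad k) i)"
    using assms adam_rate_nonneg by (intro sum_nonneg) auto
  ultimately show ?thesis
    using adam_lin_le_one[of 1 a b "spike_grad k" j] by simp
qed

lemma adam_lin_spike_recovers:
  assumes "0 \<le> a" "0 \<le> b" "b < 1" "1 \<le> q" "1 \<le> m" "m < k"
    and "b ^ m * (real k)\<^sup>2 \<le> 1" "2 / sqrt (1 - b) \<le> real (k - m)"
    and before: "adam_lin a b (spike_grad k) 1 (q * k - 1) = 1"
  shows "adam_lin a b (spike_grad k) 1 (q * k + (k - 1)) = 1"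
proof -
  let ?x = "adam_lin a b (spike_grad k) 1" and ?r = "adam_rate a b (spike_grad k)"
  have qk: "q * k = Suc (q * k - 1)" using assms by simp
  have "?x (q * k) = clamp (1 - ?r (q * k) * real k)"
    using adam_lin.simps(2)[of a b "spike_grad k" 1 "q * k - 1"] before
    unfolding qk[symmetric] by (simp add: spike_grad_def)
  moreover have "0 \<le> ?r (q * k) * real k"
    using assms adam_rate_nonneg by simp
  ultimately have down: "1 - ?r (q * k) * real k \<le> ?x (q * k)"
    using min_le_clamp[of "1 - ?r (q * k) * real k"] by simp
  have "min 1 (?x (q * k + 0) + (\<Sum>i=1..k-1. ?r (q * k + i))) \<le> ?x (q * k + (k - 1))"
  proof (rule clamp_ascent[where x = "\<lambda>i. ?x (q * k + i)" and u = "\<lambda>i. ?r (q * k + i)"])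
    fix i assume "i < k - 1"
    then show "?x (q * k + Suc i) = clamp (?x (q * k + i) + ?r (q * k + Suc i))"
      using spike_grad_between[of "Suc i" k q] by simp
  qed (use assms adam_rate_nonneg in auto)
  moreover have "?r (q * k) * real k \<le> (\<Sum>i=1..k-1. ?r (q * k + i))"
    using assms by (intro recovery_sum_ge) auto
  ultimately have "1 \<le> ?x (q * k + (k - 1))"
    using down by (simp add: min.bounded_iff)
  then show ?thesis
    using adam_lin_le_one[of 1 a b "spike_grad k" "q * k + (k - 1)"] by simp
qed

lemma adam_lin_before_spikes:
  assumes "0 \<le> a" "0 \<le> b" "b < 1" "1 \<le> m" "m < k"
    and "b ^ m * (real k)\<^sup>2 \<le> 1" "2 / sqrt (1 - b) \<le> real (k - m)"
  shows "adam_lin a b (spike_grad k) 1 (q * k + (k - 1)) = 1"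
proof (induction q)
  case 0
  show ?case using adam_lin_spike_start assms by simp
next
  case (Suc q)
  have "Suc q * k - 1 = q * k + (k - 1)" using assms by simp
  then show ?case
    using adam_lin_spike_recovers[of a b "Suc q" m k] assms Suc by simp
qed

lemma spike_loss_ge:
  assumes "0 \<le> a" "0 \<le> b" "b < 1" "1 \<le> m" "m < k"
    and "b ^ m * (real k)\<^sup>2 \<le> 1" "2 / sqrt (1 - b) \<le> real (k - m)" and "1 \<le> t"
  shows "spike_grad k t \<le> spike_grad k t * adam_lin a b (spike_grad k) 1 (t - 1)"
proof (cases "k dvd t")
  case True
  then obtain q where q: "t = Suc q * k"
    using assms by (metis dvdE mult.commute not0_implies_Suc mult_0 not_one_le_zero)
  then have "t - 1 = q * k + (k - 1)" using assms by simp
  then show ?thesis using adam_lin_before_spikes[OF assms(1-7)] by simp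
next
  case False
  then show ?thesis
    using clamp_bounds(2) by (cases "t - 1") (auto simp: spike_grad_def)
qed

lemma spike_params_exist:
  assumes "0 \<le> b" "b < 1"
  shows "\<exists>m. 1 \<le> m \<and> 2 / sqrt (1 - b) \<le> real m \<and> b ^ m * (2 * real m)\<^sup>2 \<le> 1"
proof -
  have "(\<lambda>n. real n * sqrt b ^ n) \<longlonglongrightarrow> 0"
    using powser_times_n_limit_0[of "sqrt b"] assms by simp
  then have "eventually (\<lambda>n. real n * sqrt b ^ n < 1/2) sequentially"
    by (rule order_tendstoD) simp
  moreover have "eventually (\<lambda>n. 1 + 2 / sqrt (1 - b) \<le> real n) sequentially"
    by (rule eventually_ge_at_top[of "nat \<lceil>1 + 2 / sqrt (1 - b)\<rceil>", THEN eventually_mono])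
      linarith
  ultimately have "eventually (\<lambda>n. real n * sqrt b ^ n < 1/2 \<and> 1 + 2 / sqrt (1 - b) \<le> real n)
      sequentially"
    by (rule eventually_conj)
  then obtain m where small: "real m * sqrt b ^ m < 1/2" and large: "1 + 2 / sqrt (1 - b) \<le> real m"
    using eventually_happens'[OF trivial_limit_sequentially] by blast
  have "(sqrt b ^ m)\<^sup>2 = b ^ m"
    using assms by (simp add: power_even_eq[symmetric] power_mult)
  then have "b ^ m * (2 * real m)\<^sup>2 = 4 * (real m * sqrt b ^ m)\<^sup>2"
    by (simp add: power_mult_distrib)
  also have "\<dots> \<le> 4 * (1/2)\<^sup>2"
    using small assms by (intro mult_left_mono power_mono) auto
  finally have "b ^ m * (2 * real m)\<^sup>2 \<le> 1" by (simp add: power2_eq_square)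
  moreover have "0 \<le> 2 / sqrt (1 - b)"
    using assms by simp
  then have "1 \<le> real m"
    using large by linarith
  then have "1 \<le> m"
    by simp
  ultimately show ?thesis using large by (intro exI[of _ m]) auto
qed

lemma spike_regret_ge:
  assumes "0 \<le> a" "0 \<le> b" "b < 1" "1 \<le> m" "m < k"
    and "b ^ m * (real k)\<^sup>2 \<le> 1" "2 / sqrt (1 - b) \<le> real (k - m)"
  shows "1 / real k * real T - (real k + 1)
    \<le> regret {0..1} (\<lambda>t x. spike_grad k t * x) (adam_x {0..1} (\<lambda>t x. spike_grad k t * x) 1 a 0 b) T"
proof -
  have iterates: "adam_x {0..1} (\<lambda>t x. spike_grad k t * x) 1 a 0 b t
      = adam_lin a b (spike_grad k) 1 (t - 1)" for t
    using assms by (intro adam_x_linear spike_grad_nonzero) auto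
  have "real T / real k - real k - 1 \<le> (\<Sum>t=1..T. spike_grad k t)"
    using assms by (intro sum_spike_grad_ge) auto
  also have "\<dots> \<le> (\<Sum>t=1..T. spike_grad k t * adam_x {0..1} (\<lambda>t x. spike_grad k t * x) 1 a 0 b t)"
    using spike_loss_ge[OF assms] by (intro sum_mono) (simp add: iterates)
  also have "\<dots> \<le> regret {0..1} (\<lambda>t x. spike_grad k t * x) (adam_x {0..1} (\<lambda>t x. spike_grad k t * x) 1 a 0 b) T"
    by (rule regret_linear_ge)
  finally show ?thesis
    by simp
qed

lemma ratio_not_tendsto_zero:
  fixes r :: "nat \<Rightarrow> real"
  assumes "0 < c" and lower: "\<And>T. c * real T - d \<le> r T"
  shows "\<not> (\<lambda>T. r T / real T) \<longlonglongrightarrow> 0"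
proof
  assume lim_r: "(\<lambda>T. r T / real T) \<longlonglongrightarrow> 0"
  have "eventually (\<lambda>T. c - d / real T \<le> r T / real T) sequentially"
    using eventually_ge_at_top[of "1::nat"]
  proof eventually_elim
    case (elim T)
    have "(c * real T - d) / real T \<le> r T / real T"
      using lower[of T] by (intro divide_right_mono) auto
    moreover have "(c * real T - d) / real T = c - d / real T"
      using elim by (simp add: field_simps)
    ultimately show ?case by simp
  qed
  moreover have "(\<lambda>T. c - d / real T) \<longlonglongrightarrow> c - 0"
    by (intro tendsto_diff tendsto_const lim_const_over_n)
  ultimately have "c - 0 \<le> 0"
    using tendsto_le[OF trivial_limit_sequentially lim_r] by blast
  then show False using assms by simp
qed

theorem theorem1:
  fixes \<beta>2 :: real
  assumes "0 \<le> \<beta>2" and "\<beta>2 < 1"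
  shows "\<exists>(F :: real set) (f :: nat \<Rightarrow> real \<Rightarrow> real) (x1 :: real) (G :: real).
           compact F \<and> convex F \<and> F \<noteq> {} \<and> x1 \<in> F \<and>
           (\<forall>t\<ge>1. convex_on F (f t) \<and> (\<forall>x\<in>F. f t differentiable (at x)) \<and>
                    (\<forall>x\<in>F. \<bar>deriv (f t) x\<bar> \<le> G)) \<and>
           (\<forall>\<alpha>>0. \<not> ((\<lambda>T. regret F f (adam_x F f x1 \<alpha> 0 \<beta>2) T / real T) \<longlonglongrightarrow> 0))"
proof -
  obtain m where m: "1 \<le> m" "2 / sqrt (1 - \<beta>2) \<le> real m" "\<beta>2 ^ m * (2 * real m)\<^sup>2 \<le> 1"
    using spike_params_exist assms by blast
  define k where "k = 2 * m"
  have params: "1 \<le> m" "m < k" "\<beta>2 ^ m * (real k)\<^sup>2 \<le> 1" "2 / sqrt (1 - \<beta>2) \<le> real (k - m)"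
    using m by (auto simp: k_def)
  define f where "f = (\<lambda>t (x::real). spike_grad k t * x)"
  have deriv: "deriv (f t) x = spike_grad k t" for t x
    unfolding f_def by (rule DERIV_imp_deriv) (auto intro!: derivative_eq_intros)
  have "convex_on {0..1} (f t) \<and> (\<forall>x\<in>{0..1}. f t differentiable (at x))
      \<and> (\<forall>x\<in>{0..1}. \<bar>deriv (f t) x\<bar> \<le> real k)" for t
    using params by (auto simp: f_def deriv spike_grad_def convex_on_def algebra_simps
        intro!: derivative_intros)
  moreover have "\<not> (\<lambda>T. regret {0..1} f (adam_x {0..1} f 1 \<alpha> 0 \<beta>2) T / real T) \<longlonglongrightarrow> 0"
    if "0 < \<alpha>" for \<alpha>
    unfolding f_def using params
    by (intro ratio_not_tendsto_zero[OF _ spike_regret_ge[OF less_imp_le[OF that] assms params]]) simp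
  moreover have "compact {0..1::real} \<and> convex {0..1::real} \<and> {0..1::real} \<noteq> {} \<and> (1::real) \<in> {0..1}"
    by auto
  ultimately show ?thesis
    by (intro exI[of _ "{0..1}"] exI[of _ f] exI[of _ 1] exI[of _ "real k"]) blast
qed

end
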